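(* Let $N \geq 5$ be an odd integer and $\kappa$ a real number. Let $a>0$ and $b$ be real numbers such that the data set $\Phi_N=(X_1,\dots,X_N)$ consisting of $X_1 = a$, of $\tfrac{N-1}{2}$ points equal to $b - \tfrac{a}{N-1}$, and of $\tfrac{N-1}{2}$ points equal to $-b - \tfrac{a}{N-1}$ satisfies $\mathbb{E}(X)=0$, $\mathbb{E}(X^2)=1$ and $\mathbb{E}(X^4)=\kappa$, and such that $a^2$ is the larger root of the quadratic equation below. Then $a^2$ satisfies $$(a^2)^2 - 2\frac{N-1}{N+1}\,a^2 + G(N,\kappa) = 0,$$ and consequently $$a = a(N,\kappa) = \sqrt{ \frac{N-1}{N+1} + \sqrt{ \Bigl( \frac{N-1}{N+1} \Bigr)^2 - G(N,\kappa)}},$$ where $$G(N,\kappa) = \frac{N(N-1)^2 - (N-1)^3 \kappa}{(N+1)(N-3)}.$$ Furthermore, for fixed $\kappa > 1$, $a(N,\kappa) \sim [N (\kappa - 1)]^{1/4}$ as $N \to \infty$.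
   Context: For a finite data set $(X_1,\dots,X_N)$ and a function $f$, $\mathbb{E}(f(X))$ denotes the empirical mean $\frac1N\sum_{i=1}^N f(X_i)$. Since the mean is $0$ and the second moment is $1$, $\kappa=\mathbb{E}(X^4)$ is the kurtosis of the data set, and $a$ is the number of standard deviations by which $X_1$ lies above the mean. *)

theory Defs
  imports "HOL-Analysis.Analysis" "HOL-Library.Landau_Symbols"
begin

definition emp_mean :: "nat \<Rightarrow> (nat \<Rightarrow> real) \<Rightarrow> (real \<Rightarrow> real) \<Rightarrow> real" where
  "emp_mean N X f = (\<Sum>i=1..N. f (X i)) / real N"

definition Phi :: "nat \<Rightarrow> real \<Rightarrow> real \<Rightarrow> nat \<Rightarrow> real" where
  "Phi N a b i = (if i = 1 then a
                  else if i \<le> (N + 1) div 2 then b - a / (real N - 1)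
                  else - b - a / (real N - 1))"

definition G :: "real \<Rightarrow> real \<Rightarrow> real" where
  "G N \<kappa> = (N * (N - 1)^2 - (N - 1)^3 * \<kappa>) / ((N + 1) * (N - 3))"

definition a_fun :: "real \<Rightarrow> real \<Rightarrow> real" where
  "a_fun N \<kappa> = sqrt ((N - 1) / (N + 1) + sqrt (((N - 1) / (N + 1))^2 - G N \<kappa>))"

end

theory Submission imports Defs "HOL-Real_Asymp.Real_Asymp" begin

text \<open>Write \<open>N = 2m + 1\<close> and \<open>c = a/(2m)\<close>, so that the two clusters sit at \<open>\<plusminus>b - c\<close>.
  The mean vanishes for every \<open>b\<close>, while the second and fourth moments are
  \<open>a\<^sup>2 + 2m(b\<^sup>2 + c\<^sup>2) = N\<close> and \<open>a\<^sup>4 + 2m(b\<^sup>4 + 6b\<^sup>2c\<^sup>2 + c\<^sup>4) = N\<kappa>\<close>.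
  Eliminating \<open>b\<^sup>2\<close> between them leaves a quadratic equation for \<open>a\<^sup>2\<close>, and choosing its
  larger root gives the closed form. For large \<open>N\<close> the inner square root dominates and
  behaves like \<open>\<surd>(N(\<kappa> - 1))\<close>.\<close>

lemma sum_Phi_odd:
  fixes f :: "real \<Rightarrow> real"
  shows "(\<Sum>i=1..2*m+1. f (Phi (2*m+1) a b i))
           = f a + real m * f (b - a / (2 * real m)) + real m * f (- b - a / (2 * real m))"
proof -
  have split: "{1..2*m+1} = {1} \<union> ({2..m+1} \<union> {m+2..2*m+1})" by auto
  have left: "(\<Sum>i=2..m+1. f (Phi (2*m+1) a b i)) = (\<Sum>i=2..m+1. f (b - a / (2 * real m)))"
    by (rule sum.cong) (auto simp: Phi_def)
  have right: "(\<Sum>i=m+2..2*m+1. f (Phi (2*m+1) a b i)) = (\<Sum>i=m+2..2*m+1. f (- b - a / (2 * real m)))"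
    by (rule sum.cong) (auto simp: Phi_def)
  show ?thesis
    unfolding split by (subst sum.union_disjoint, auto simp: sum.union_disjoint left right Phi_def)
qed

lemma emp_mean_Phi_odd:
  "emp_mean (2*m+1) (Phi (2*m+1) a b) f
     = (f a + real m * f (b - a / (2 * real m)) + real m * f (- b - a / (2 * real m))) / (2 * real m + 1)"
  unfolding emp_mean_def sum_Phi_odd by simp

lemma Phi_moments_quadratic:
  fixes x a b k :: real
  assumes x: "x > 1"
    and second: "a^2 + x * (b - a/(2*x))^2 + x * (- b - a/(2*x))^2 = 2*x + 1"
    and fourth: "a^4 + x * (b - a/(2*x))^4 + x * (- b - a/(2*x))^4 = (2*x + 1) * k"
  shows "(a^2)^2 - 2 * ((2*x + 1 - 1) / (2*x + 1 + 1)) * a^2 + G (2*x + 1) k = 0"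
proof -
  define c where "c = a / (2*x)"
  have a: "a = 2*x*c" using x by (simp add: c_def)
  have second': "4*x^2*c^2 + 2*x*(b^2 + c^2) = 2*x + 1"
    using second[unfolded c_def[symmetric], unfolded a] by (simp add: algebra_simps power2_eq_square)
  have fourth': "16*x^4*c^4 + 2*x*(b^4 + 6*b^2*c^2 + c^4) = (2*x + 1) * k"
    using fourth[unfolded c_def[symmetric], unfolded a] by algebra
  have "(2*x + 1) * ((2*x + 2)*(2*x - 2)*(a^2)^2 - 4*x*(2*x - 2)*a^2 + (2*x + 1)*(2*x)^2 - (2*x)^3*k) = 0"
    using second' fourth' unfolding a by algebra
  then have cleared: "(2*x + 2)*(2*x - 2)*(a^2)^2 - 4*x*(2*x - 2)*a^2 + (2*x + 1)*(2*x)^2 - (2*x)^3*k = 0"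
    using x by simp
  have "(2*x + 1 + 1) * (2*x + 1 - 3) \<noteq> 0" "2*x + 1 + 1 \<noteq> 0" using x by auto
  with cleared show ?thesis
    unfolding G_def by (simp add: divide_simps) algebra
qed

lemma larger_root_of_quadratic:
  fixes p g y :: real
  assumes root: "y^2 - 2*p*y + g = 0"
    and larger: "\<forall>z. z^2 - 2*p*z + g = 0 \<longrightarrow> z \<le> y"
  shows "y = p + sqrt (p^2 - g)"
proof -
  have discr: "p^2 - g = (y - p)^2" using root by (simp add: algebra_simps power2_eq_square)
  have "(p + s)^2 - 2*p*(p + s) + g = 0" if "s^2 = p^2 - g" for s
    using that by algebra
  with larger have "p + \<bar>y - p\<bar> \<le> y" unfolding discr by (simp add: power2_abs)
  then show ?thesis unfolding discr by simp
qed

lemma a_fun_asymp_equiv: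
  assumes "k > (1::real)"
  shows "(\<lambda>n. a_fun n k) \<sim>[at_top] (\<lambda>n. (n * (k - 1)) powr (1/4))"
proof (rule asymp_equivI')
  obtain t where "t > 0" and k: "k = 1 + t"
    using assms by (metis add.commute diff_add_cancel diff_gt_0_iff_gt)
  then show "((\<lambda>n. a_fun n k / (n * (k - 1)) powr (1/4)) \<longlongrightarrow> 1) at_top"
    unfolding a_fun_def G_def k by (real_asymp simp add: powr_powr)
qed

theorem proposition1:
  fixes N :: nat and \<kappa> a b :: real
  assumes "N \<ge> 5" and "odd N" and "a > 0"
    and "emp_mean N (Phi N a b) (\<lambda>x. x) = 0"
    and "emp_mean N (Phi N a b) (\<lambda>x. x^2) = 1"
    and "emp_mean N (Phi N a b) (\<lambda>x. x^4) = \<kappa>"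
    and larger_root: "\<forall>y::real. y^2 - 2 * ((real N - 1) / (real N + 1)) * y + G (real N) \<kappa> = 0
                         \<longrightarrow> y \<le> a^2"
  shows "(a^2)^2 - 2 * ((real N - 1) / (real N + 1)) * a^2 + G (real N) \<kappa> = 0
         \<and> a = a_fun (real N) \<kappa>
         \<and> (\<forall>k::real. k > 1 \<longrightarrow>
              (\<lambda>n::nat. a_fun (real (2*n+1)) k) \<sim>[at_top]
              (\<lambda>n::nat. (real (2*n+1) * (k - 1)) powr (1/4)))"
proof -
  obtain m where N: "N = 2*m + 1" using \<open>odd N\<close> oddE by blast
  have "real m > 1" using \<open>N \<ge> 5\<close> N by simp
  moreover have "a^2 + real m * (b - a/(2*real m))^2 + real m * (- b - a/(2*real m))^2 = 2*real m + 1"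
    using assms(5) unfolding N emp_mean_Phi_odd by (simp add: field_simps)
  moreover have "a^4 + real m * (b - a/(2*real m))^4 + real m * (- b - a/(2*real m))^4 = (2*real m + 1) * \<kappa>"
    using assms(6) unfolding N emp_mean_Phi_odd by (simp add: field_simps)
  ultimately have "(a^2)^2 - 2 * ((2*real m + 1 - 1) / (2*real m + 1 + 1)) * a^2 + G (2*real m + 1) \<kappa> = 0"
    by (rule Phi_moments_quadratic)
  moreover have "real N = 2*real m + 1" using N by simp
  ultimately have quadratic: "(a^2)^2 - 2 * ((real N - 1) / (real N + 1)) * a^2 + G (real N) \<kappa> = 0"
    by simp
  have "a^2 = (real N - 1) / (real N + 1) + sqrt (((real N - 1) / (real N + 1))^2 - G (real N) \<kappa>)"
    by (rule larger_root_of_quadratic[OF quadratic larger_root])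
  then have "a = a_fun (real N) \<kappa>"
    using \<open>a > 0\<close> unfolding a_fun_def by (metis less_imp_le real_sqrt_unique)
  moreover have "filterlim (\<lambda>n::nat. real (2*n+1)) at_top at_top" by real_asymp
  ultimately show ?thesis
    using quadratic a_fun_asymp_equiv asymp_equiv_compose' by blast
qed

end
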